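(* Let $R$ be a finite commutative local Frobenius ring with residue field $\mathbb{F}_q$, and let $\ell$ be a nonnegative integer. Let $C$ be a linear code over $R$ of length $n$ with generator matrix $\mathrm{G}$ and parity check matrix $\mathrm{H}$. Then $\dim(\texttt{Hull}(C))=\ell$ if and only if $\texttt{Rank}_q(\mathrm{G}\mathrm{G}^\top)=\texttt{Rank}_q(\mathrm{G})-\ell$ or $\texttt{Rank}_q(\mathrm{H}\mathrm{H}^\top)=\texttt{Rank}_q(\mathrm{H})-\ell$.
   Context: A linear code of length $n$ over $R$ is an $R$-submodule of $R^n$; $\dim(C):=\log_q|C|$. $C^\perp$ is the dual with respect to the standard inner product $\sum_j u_jc_j$, and $\texttt{Hull}(C):=C\cap C^\perp$. A generator matrix of $C$ is a matrix whose rows generate $C$; a parity check matrix is a generator matrix of $C^\perp$. For a matrix $\mathrm{A}$ over $R$, $\texttt{Rank}_q(\mathrm{A}):=\log_q|M|$ where $M$ is the $R$-submodule spanned by the rows of $\mathrm{A}$. *)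

theory Defs
  imports Complex_Main
begin

definition is_ideal :: "'a::comm_ring_1 set \<Rightarrow> bool" where
  "is_ideal I \<longleftrightarrow> 0 \<in> I \<and> (\<forall>x\<in>I. \<forall>y\<in>I. x + y \<in> I) \<and> (\<forall>r. \<forall>x\<in>I. r * x \<in> I)"

definition maximal_ideal :: "'a::comm_ring_1 set \<Rightarrow> bool" where
  "maximal_ideal M \<longleftrightarrow> is_ideal M \<and> M \<noteq> UNIV \<and>
     (\<forall>J. is_ideal J \<and> M \<subseteq> J \<and> J \<noteq> UNIV \<longrightarrow> J = M)"

definition minimal_ideal :: "'a::comm_ring_1 set \<Rightarrow> bool" where
  "minimal_ideal I \<longleftrightarrow> is_ideal I \<and> I \<noteq> {0} \<and>
     (\<forall>J. is_ideal J \<and> J \<subseteq> I \<and> J \<noteq> {0} \<longrightarrow> J = I)"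

definition local_ring :: "'a::comm_ring_1 itself \<Rightarrow> bool" where
  "local_ring _ \<longleftrightarrow> (\<exists>!M::'a set. maximal_ideal M)"

text \<open>A finite commutative local ring is Frobenius iff it has a unique minimal ideal.\<close>
definition frobenius_local_ring :: "'a::comm_ring_1 itself \<Rightarrow> bool" where
  "frobenius_local_ring T \<longleftrightarrow> local_ring T \<and> (\<exists>!I::'a set. minimal_ideal I)"

definition max_ideal :: "'a::comm_ring_1 itself \<Rightarrow> 'a set" where
  "max_ideal _ = (THE M. maximal_ideal M)"

definition residue_card :: "'a::comm_ring_1 itself \<Rightarrow> nat" where
  "residue_card T = card {{x + m | m. m \<in> max_ideal T} | x::'a. True}"

section \<open>Linear codes over R, vectors indexed by a finite type 'n (length n = CARD('n))\<close>

definition linear_code :: "('n::finite \<Rightarrow> 'a::comm_ring_1) set \<Rightarrow> bool" where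
  "linear_code C \<longleftrightarrow> (\<lambda>j. 0) \<in> C \<and> (\<forall>u\<in>C. \<forall>v\<in>C. (\<lambda>j. u j + v j) \<in> C) \<and> (\<forall>r. \<forall>u\<in>C. (\<lambda>j. r * u j) \<in> C)"

definition inner_std :: "('n::finite \<Rightarrow> 'a::comm_ring_1) \<Rightarrow> ('n \<Rightarrow> 'a) \<Rightarrow> 'a" where
  "inner_std u v = (\<Sum>j\<in>UNIV. u j * v j)"

definition dual_code :: "('n::finite \<Rightarrow> 'a::comm_ring_1) set \<Rightarrow> ('n \<Rightarrow> 'a) set" where
  "dual_code C = {u. \<forall>c\<in>C. inner_std u c = 0}"

definition code_hull :: "('n::finite \<Rightarrow> 'a::comm_ring_1) set \<Rightarrow> ('n \<Rightarrow> 'a) set" where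
  "code_hull C = C \<inter> dual_code C"

definition dim_q :: "nat \<Rightarrow> ('n::finite \<Rightarrow> 'a::comm_ring_1) set \<Rightarrow> real" where
  "dim_q q C = log (real q) (real (card C))"

definition row_span :: "('k::finite \<Rightarrow> 'n::finite \<Rightarrow> 'a::comm_ring_1) \<Rightarrow> ('n \<Rightarrow> 'a) set" where
  "row_span A = {(\<lambda>j. \<Sum>i\<in>UNIV. c i * A i j) | c. True}"

definition rank_q :: "nat \<Rightarrow> ('k::finite \<Rightarrow> 'n::finite \<Rightarrow> 'a::comm_ring_1) \<Rightarrow> real" where
  "rank_q q A = log (real q) (real (card (row_span A)))"

definition mat_mult_transpose :: "('k::finite \<Rightarrow> 'n::finite \<Rightarrow> 'a::comm_ring_1) \<Rightarrow> ('k \<Rightarrow> 'k \<Rightarrow> 'a)" where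
  "mat_mult_transpose A = (\<lambda>i i'. \<Sum>j\<in>UNIV. A i j * A i' j)"

definition generator_matrix :: "('k::finite \<Rightarrow> 'n::finite \<Rightarrow> 'a::comm_ring_1) \<Rightarrow> ('n \<Rightarrow> 'a) set \<Rightarrow> bool" where
  "generator_matrix G C \<longleftrightarrow> row_span G = C"

definition parity_check_matrix :: "('m::finite \<Rightarrow> 'n::finite \<Rightarrow> 'a::comm_ring_1) \<Rightarrow> ('n \<Rightarrow> 'a) set \<Rightarrow> bool" where
  "parity_check_matrix H C \<longleftrightarrow> row_span H = dual_code C"

end

(*
  Over any finite commutative ring, the map c |-> (<c, g_i>)_i on the row span C of G has kernel
  Hull(C) and image the row span of G G^T, so Rank_q(G) = dim Hull(C) + Rank_q(G G^T). Applied to H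
  this gives the second equation as soon as Hull(C^perp) = Hull(C), i.e. C^perp^perp = C; this is
  where the Frobenius property enters, through |C| |C^perp| = |R^n|. The lower bound
  |R^n| <= |C| |C^perp| goes by induction along maximal subcodes C' of C: then C = C' + R x with
  C/C' = R/M, and C^perp has index at most |soc R| in C'^perp, where |soc R| |M| <= |R| because the
  socle is the unique minimal ideal. The upper bound follows by applying the lower bound to the
  column span of a matrix whose row span is C.
*)

theory Submission
  imports Defs "HOL-Library.Function_Algebras" "HOL-Library.Product_Plus" "HOL-Library.Cardinality"
begin

lemma card_eq_card_kernel_mult_card_image:
  fixes f :: "'b::ab_group_add \<Rightarrow> 'c::ab_group_add"
  assumes fin: "finite A"
    and add: "\<And>x y. x \<in> A \<Longrightarrow> y \<in> A \<Longrightarrow> x + y \<in> A"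
    and neg: "\<And>x. x \<in> A \<Longrightarrow> - x \<in> A"
    and hom: "\<And>x y. x \<in> A \<Longrightarrow> y \<in> A \<Longrightarrow> f (x + y) = f x + f y"
  shows "card A = card {x \<in> A. f x = 0} * card (f ` A)"
proof -
  have fibre: "card {x \<in> A. f x = f a} = card {x \<in> A. f x = 0}" if a: "a \<in> A" for a
  proof -
    have diff: "x - a \<in> A" and f_diff: "f (x - a) = f x - f a" if "x \<in> A" for x
      using add[OF that neg[OF a]] hom[OF add[OF that neg[OF a]] a]
      by (simp_all add: eq_diff_eq)
    have "bij_betw (\<lambda>x. x - a) {x \<in> A. f x = f a} {x \<in> A. f x = 0}"
    proof (rule bij_betw_byWitness[where f' = "\<lambda>x. x + a"])
      show "(\<lambda>x. x + a) ` {x \<in> A. f x = 0} \<subseteq> {x \<in> A. f x = f a}"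
        using add a hom by auto
    qed (use diff f_diff in auto)
    then show ?thesis
      by (rule bij_betw_same_card)
  qed
  have "card A = (\<Sum>y\<in>f ` A. card {x \<in> A. f x = y})"
    using sum.group[of A "f ` A" f "\<lambda>_. 1::nat"] fin by simp
  also have "\<dots> = (\<Sum>y\<in>f ` A. card {x \<in> A. f x = 0})"
    using fibre by (intro sum.cong) auto
  finally show ?thesis
    by simp
qed

section \<open>Finite local rings and their socle\<close>

lemma maximal_ideal_max_ideal:
  assumes "local_ring TYPE('a::comm_ring_1)"
  shows "maximal_ideal (max_ideal TYPE('a))"
  using assms unfolding local_ring_def max_ideal_def by (rule theI')

lemma maximal_ideal_eq_max_ideal:
  assumes "local_ring TYPE('a::comm_ring_1)" "maximal_ideal (J::'a set)"
  shows "J = max_ideal TYPE('a)"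
  using assms maximal_ideal_max_ideal[OF assms(1)] unfolding local_ring_def by blast

lemma ideal_mult_closed: "is_ideal I \<Longrightarrow> x \<in> I \<Longrightarrow> r * x \<in> I"
  unfolding is_ideal_def by blast

lemma is_ideal_principal: "is_ideal (range (\<lambda>r. r * x))"
  unfolding is_ideal_def
proof (intro conjI ballI allI)
  show "0 \<in> range (\<lambda>r. r * x)"
    using rangeI[of "\<lambda>r. r * x" 0] by simp
  fix a b assume "a \<in> range (\<lambda>r. r * x)" "b \<in> range (\<lambda>r. r * x)"
  then show "a + b \<in> range (\<lambda>r. r * x)"
    by (auto simp flip: distrib_right)
next
  fix s a assume "a \<in> range (\<lambda>r. r * x)"
  then show "s * a \<in> range (\<lambda>r. r * x)"
    by (auto simp flip: mult.assoc)
qed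

lemma ideal_subset_maximal_ideal:
  fixes I :: "'a::{comm_ring_1,finite} set"
  assumes "is_ideal I" "I \<noteq> UNIV"
  obtains J where "maximal_ideal J" "I \<subseteq> J"
proof -
  let ?P = "\<lambda>J::'a set. is_ideal J \<and> I \<subseteq> J \<and> J \<noteq> UNIV"
  obtain J where J: "?P J" and greatest: "\<And>K. ?P K \<Longrightarrow> card K \<le> card J"
    using ex_has_greatest_nat[of ?P I card "Suc CARD('a)"] assms
    by (auto simp: card_mono le_imp_less_Suc)
  have "maximal_ideal J"
    unfolding maximal_ideal_def
  proof (intro conjI allI impI)
    fix K assume K: "is_ideal K \<and> J \<subseteq> K \<and> K \<noteq> UNIV"
    with J greatest[of K] show "K = J"
      using card_seteq[of K J] by auto
  qed (use J in auto)
  with J that show thesis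
    by blast
qed

lemma one_notin_max_ideal:
  assumes "local_ring TYPE('a::comm_ring_1)"
  shows "(1::'a) \<notin> max_ideal TYPE('a)"
proof
  assume "(1::'a) \<in> max_ideal TYPE('a)"
  then have "r \<in> max_ideal TYPE('a)" for r :: 'a
    using ideal_mult_closed[of _ 1 r] maximal_ideal_max_ideal[OF assms]
    unfolding maximal_ideal_def by simp
  then show False
    using maximal_ideal_max_ideal[OF assms] unfolding maximal_ideal_def by blast
qed

lemma unit_if_notin_max_ideal:
  assumes "local_ring TYPE('a::{comm_ring_1,finite})" "(x::'a) \<notin> max_ideal TYPE('a)"
  obtains y where "y * x = 1"
proof (cases "range (\<lambda>r. r * x) = UNIV")
  case True
  then have "1 \<in> range (\<lambda>r. r * x)"
    by simp
  with that show thesis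
    by (metis imageE)
next
  case False
  then obtain J where "maximal_ideal J" "range (\<lambda>r. r * x) \<subseteq> J"
    using ideal_subset_maximal_ideal is_ideal_principal by blast
  moreover have "x \<in> range (\<lambda>r. r * x)"
    using rangeI[of "\<lambda>r. r * x" 1] by simp
  ultimately have "x \<in> max_ideal TYPE('a)"
    using maximal_ideal_eq_max_ideal[OF assms(1)] by blast
  with assms(2) show thesis
    by blast
qed

definition socle :: "'a::comm_ring_1 itself \<Rightarrow> 'a set" where
  "socle T = {t. \<forall>m\<in>max_ideal T. m * t = 0}"

lemma minimal_ideal_principal_socle:
  assumes loc: "local_ring TYPE('a::{comm_ring_1,finite})"
    and t: "(t::'a) \<in> socle TYPE('a)" "t \<noteq> 0"
  shows "minimal_ideal (range (\<lambda>r. r * t))"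
  unfolding minimal_ideal_def
proof (intro conjI allI impI)
  have "t \<in> range (\<lambda>r. r * t)"
    using rangeI[of "\<lambda>r. r * t" 1] by simp
  then show "range (\<lambda>r. r * t) \<noteq> {0}"
    using t(2) by blast
  show "is_ideal (range (\<lambda>r. r * t))"
    by (rule is_ideal_principal)
  fix J assume J: "is_ideal J \<and> J \<subseteq> range (\<lambda>r. r * t) \<and> J \<noteq> {0}"
  then obtain r where rt: "r * t \<in> J" "r * t \<noteq> 0"
    unfolding is_ideal_def by blast
  then have "r \<notin> max_ideal TYPE('a)"
    using t(1) unfolding socle_def by blast
  then obtain v where "v * r = 1"
    using unit_if_notin_max_ideal[OF loc] by blast
  then have "t \<in> J"
    using ideal_mult_closed[OF conjunct1[OF J] rt(1), of v] by (simp flip: mult.assoc)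
  then show "J = range (\<lambda>r. r * t)"
    using J ideal_mult_closed by blast
qed

lemma card_socle_mult_card_max_ideal_le:
  assumes frob: "frobenius_local_ring TYPE('a::{comm_ring_1,finite})"
  shows "card (socle TYPE('a)) * card (max_ideal TYPE('a)) \<le> CARD('a)"
proof (cases "socle TYPE('a) \<subseteq> {0}")
  case True
  then have "card (socle TYPE('a)) \<le> 1"
    using card_mono[of "{0}" "socle TYPE('a)"] by simp
  moreover have "card (max_ideal TYPE('a)) \<le> CARD('a)"
    by (simp add: card_mono)
  ultimately show ?thesis
    using mult_le_mono by fastforce
next
  case False
  have loc: "local_ring TYPE('a)"
    using frob unfolding frobenius_local_ring_def by blast
  obtain s where s: "s \<in> socle TYPE('a)" "s \<noteq> 0"
    using False by blast
  text \<open>The socle lies in the unique minimal ideal \<open>R s\<close>, and \<open>R s \<cong> R / ann s\<close> with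
    the maximal ideal inside \<open>ann s\<close>.\<close>
  have "socle TYPE('a) \<subseteq> range (\<lambda>r. r * s)"
  proof
    fix t assume t: "t \<in> socle TYPE('a)"
    show "t \<in> range (\<lambda>r. r * s)"
    proof (cases "t = 0")
      case True
      then show ?thesis
        using rangeI[of "\<lambda>r. r * s" 0] by simp
    next
      case False
      then have "range (\<lambda>r. r * t) = range (\<lambda>r. r * s)"
        using minimal_ideal_principal_socle[OF loc] t s frob
        unfolding frobenius_local_ring_def by blast
      then show ?thesis
        using rangeI[of "\<lambda>r. r * t" 1] by simp
    qed
  qed
  then have "card (socle TYPE('a)) \<le> card (range (\<lambda>r. r * s))"
    by (simp add: card_mono)
  moreover have "card (max_ideal TYPE('a)) \<le> card {r. r * s = 0}"
    using s(1) unfolding socle_def by (intro card_mono) auto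
  moreover have "CARD('a) = card {r. r * s = 0} * card (range (\<lambda>r. r * s))"
    using card_eq_card_kernel_mult_card_image[of UNIV "\<lambda>r. r * s"] by (simp add: distrib_right)
  ultimately show ?thesis
    by (metis mult.commute mult_le_mono)
qed

section \<open>Linear codes and row spans\<close>

lemma inner_std_commute: "inner_std u v = inner_std v u"
  unfolding inner_std_def by (simp add: mult.commute)

lemma inner_std_add_left: "inner_std (\<lambda>j. a j + b j) u = inner_std a u + inner_std b u"
  unfolding inner_std_def by (simp add: distrib_right sum.distrib)

lemma inner_std_scale_left: "inner_std (\<lambda>j. r * a j) u = r * inner_std a u"
  unfolding inner_std_def by (simp add: sum_distrib_left mult.assoc)

lemma inner_std_add_right: "inner_std u (\<lambda>j. a j + b j) = inner_std u a + inner_std u b"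
  using inner_std_add_left inner_std_commute by metis

lemma inner_std_scale_right: "inner_std u (\<lambda>j. r * a j) = r * inner_std u a"
  using inner_std_scale_left inner_std_commute by metis

lemma inner_std_zero_left: "inner_std (\<lambda>j. 0) u = 0"
  unfolding inner_std_def by simp

lemma linear_code_add: "linear_code C \<Longrightarrow> x \<in> C \<Longrightarrow> y \<in> C \<Longrightarrow> x + y \<in> C"
  unfolding linear_code_def plus_fun_def by blast

lemma linear_code_scale: "linear_code C \<Longrightarrow> x \<in> C \<Longrightarrow> (\<lambda>j. r * x j) \<in> C"
  unfolding linear_code_def by blast

lemma linear_code_uminus: "linear_code C \<Longrightarrow> x \<in> C \<Longrightarrow> - x \<in> C"
  using linear_code_scale[of C x "-1"] by (simp add: fun_Compl_def)

lemma linear_code_sum: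
  assumes "linear_code C" "finite S" "\<And>i. i \<in> S \<Longrightarrow> u i \<in> C"
  shows "(\<lambda>j. \<Sum>i\<in>S. u i j) \<in> C"
  using assms(2,3)
proof (induction S rule: finite_induct)
  case empty
  then show ?case
    using assms(1) unfolding linear_code_def by simp
next
  case (insert i S)
  then show ?case
    using assms(1) unfolding linear_code_def by simp
qed

lemma linear_code_dual_code: "linear_code (dual_code C)"
  unfolding linear_code_def dual_code_def
  by (simp add: inner_std_add_left inner_std_scale_left inner_std_zero_left)

lemma row_span_eq_range: "row_span A = range (\<lambda>c j. \<Sum>i\<in>UNIV. c i * A i j)"
  unfolding row_span_def by auto

lemma row_in_row_span: "A i \<in> row_span A"
proof -
  have "A i = (\<lambda>j. \<Sum>i'\<in>UNIV. (if i' = i then 1 else 0) * A i' j)"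
  proof
    fix j
    have "(\<Sum>i'\<in>UNIV. (if i' = i then 1 else 0) * A i' j) = (\<Sum>i'\<in>UNIV. if i' = i then A i' j else 0)"
      by (intro sum.cong) simp_all
    then show "A i j = (\<Sum>i'\<in>UNIV. (if i' = i then 1 else 0) * A i' j)"
      by simp
  qed
  then show ?thesis
    unfolding row_span_def by (intro CollectI exI[of _ "\<lambda>i'. if i' = i then 1 else 0"]) simp
qed

lemma linear_code_row_span: "linear_code (row_span A)"
  unfolding linear_code_def
proof (intro conjI ballI allI)
  show "(\<lambda>j. 0) \<in> row_span A"
    unfolding row_span_def by (intro CollectI exI[of _ "\<lambda>i. 0"]) simp
next
  fix u v assume "u \<in> row_span A" "v \<in> row_span A"
  then obtain c d where "u = (\<lambda>j. \<Sum>i\<in>UNIV. c i * A i j)" "v = (\<lambda>j. \<Sum>i\<in>UNIV. d i * A i j)"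
    unfolding row_span_def by blast
  then show "(\<lambda>j. u j + v j) \<in> row_span A"
    unfolding row_span_def
    by (intro CollectI exI[of _ "\<lambda>i. c i + d i"]) (simp add: distrib_right sum.distrib)
next
  fix r u assume "u \<in> row_span A"
  then obtain c where "u = (\<lambda>j. \<Sum>i\<in>UNIV. c i * A i j)"
    unfolding row_span_def by blast
  then show "(\<lambda>j. r * u j) \<in> row_span A"
    unfolding row_span_def
    by (intro CollectI exI[of _ "\<lambda>i. r * c i"]) (simp add: sum_distrib_left mult.assoc)
qed

lemma inner_std_row_comb:
  "inner_std u (\<lambda>j. \<Sum>i\<in>UNIV. c i * A i j) = (\<Sum>i\<in>UNIV. c i * inner_std u (A i))"
  unfolding inner_std_def sum_distrib_left
  by (subst sum.swap) (simp add: ac_simps)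

lemma dual_code_row_span: "dual_code (row_span A) = {u. \<forall>i. inner_std u (A i) = 0}"
  unfolding dual_code_def
  using row_in_row_span by (auto simp: row_span_def inner_std_row_comb)

lemma row_span_codeword_matrix:
  fixes C :: "('n::finite \<Rightarrow> 'a::{comm_ring_1,finite}) set"
  assumes C: "linear_code C"
  defines "A \<equiv> \<lambda>v::'n \<Rightarrow> 'a. if v \<in> C then v else (\<lambda>j. 0)"
  shows "row_span A = C"
proof
  have scaled_rows: "(\<lambda>j. c v * A v j) \<in> C" for c v
    using linear_code_scale[OF C, of v "c v"] linear_code_scale[OF C, of "\<lambda>j. 0" "c v"] C
    unfolding A_def linear_code_def by auto
  show "row_span A \<subseteq> C"
  proof
    fix u assume "u \<in> row_span A"
    then obtain c where "u = (\<lambda>j. \<Sum>v\<in>UNIV. c v * A v j)"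
      unfolding row_span_def by blast
    then show "u \<in> C"
      using linear_code_sum[OF C finite_class.finite_UNIV, of "\<lambda>v j. c v * A v j"] scaled_rows
      by simp
  qed
  show "C \<subseteq> row_span A"
  proof
    fix v assume "v \<in> C"
    then show "v \<in> row_span A"
      using row_in_row_span[of A v] unfolding A_def by simp
  qed
qed

lemma card_linear_code_gt_0:
  fixes C :: "('n::finite \<Rightarrow> 'a::{comm_ring_1,finite}) set"
  shows "linear_code C \<Longrightarrow> card C > 0"
  unfolding linear_code_def by (auto simp: card_gt_0_iff)

lemma card_dual_code_row_span_mult_card_column_span:
  fixes A :: "'k::finite \<Rightarrow> 'n::finite \<Rightarrow> 'a::{comm_ring_1,finite}"
  shows "card (dual_code (row_span A)) * card (row_span (\<lambda>j i. A i j)) = CARD('n \<Rightarrow> 'a)"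
proof -
  let ?f = "\<lambda>u::'n \<Rightarrow> 'a. (\<lambda>i. \<Sum>j\<in>UNIV. u j * A i j)"
  have "CARD('n \<Rightarrow> 'a) = card {u. ?f u = 0} * card (range ?f)"
    using card_eq_card_kernel_mult_card_image[of UNIV ?f]
    by (simp add: fun_eq_iff distrib_right sum.distrib)
  moreover have "{u. ?f u = 0} = dual_code (row_span A)"
    unfolding dual_code_row_span inner_std_def by (auto simp: fun_eq_iff)
  moreover have "range ?f = row_span (\<lambda>j i. A i j)"
    unfolding row_span_eq_range ..
  ultimately show ?thesis
    by simp
qed

section \<open>The size of the dual code over a Frobenius ring\<close>

definition extend_code ::
    "('n::finite \<Rightarrow> 'a::comm_ring_1) set \<Rightarrow> ('n \<Rightarrow> 'a) \<Rightarrow> ('n \<Rightarrow> 'a) set" where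
  "extend_code C x = {(\<lambda>j. c j + r * x j) | c r. c \<in> C}"

lemma extend_codeI: "c \<in> C \<Longrightarrow> (\<lambda>j. c j + r * x j) \<in> extend_code C x"
  unfolding extend_code_def by blast

lemma linear_code_extend_code:
  assumes C: "linear_code C"
  shows "linear_code (extend_code C x)"
  unfolding linear_code_def
proof (intro conjI ballI allI)
  show "(\<lambda>j. 0) \<in> extend_code C x"
    using extend_codeI[of "\<lambda>j. 0" C 0 x] C unfolding linear_code_def by simp
next
  fix u v assume "u \<in> extend_code C x" "v \<in> extend_code C x"
  then obtain c r d s where "c \<in> C" "d \<in> C" "u = (\<lambda>j. c j + r * x j)" "v = (\<lambda>j. d j + s * x j)"
    unfolding extend_code_def by blast
  then show "(\<lambda>j. u j + v j) \<in> extend_code C x"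
    using extend_codeI[of "\<lambda>j. c j + d j" C "r + s" x] C unfolding linear_code_def
    by (simp add: algebra_simps)
next
  fix t u assume "u \<in> extend_code C x"
  then obtain c r where "c \<in> C" "u = (\<lambda>j. c j + r * x j)"
    unfolding extend_code_def by blast
  then show "(\<lambda>j. t * u j) \<in> extend_code C x"
    using extend_codeI[of "\<lambda>j. t * c j" C "t * r" x] C unfolding linear_code_def
    by (simp add: algebra_simps)
qed

lemma subset_extend_code: "C \<subseteq> extend_code C x"
  using extend_codeI[of _ C 0 x] by auto

lemma in_extend_code: "linear_code C \<Longrightarrow> x \<in> extend_code C x"
  using extend_codeI[of "\<lambda>j. 0" C 1 x] unfolding linear_code_def by simp

lemma extend_code_subset:
  assumes "linear_code D" "C \<subseteq> D" "x \<in> D"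
  shows "extend_code C x \<subseteq> D"
proof
  fix u assume "u \<in> extend_code C x"
  then obtain c r where "c \<in> C" "u = (\<lambda>j. c j + r * x j)"
    unfolding extend_code_def by blast
  then show "u \<in> D"
    using assms linear_code_scale[OF assms(1,3), of r] unfolding linear_code_def by auto
qed

lemma obtain_maximal_subcode:
  fixes C :: "('n::finite \<Rightarrow> 'a::{comm_ring_1,finite}) set"
  assumes C: "linear_code C" and nonzero: "C \<noteq> {\<lambda>j. 0}"
  obtains C' where "linear_code C'" "C' \<subset> C"
    and "\<And>y. y \<in> C \<Longrightarrow> y \<notin> C' \<Longrightarrow> extend_code C' y = C"
proof -
  let ?P = "\<lambda>D. linear_code D \<and> D \<subset> C"
  have "?P {\<lambda>j. 0}"
    using C nonzero unfolding linear_code_def by auto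
  then obtain C' where C': "?P C'" and greatest: "\<And>D. ?P D \<Longrightarrow> card D \<le> card C'"
    using ex_has_greatest_nat[of ?P "{\<lambda>j. 0}" card "Suc (card C)"]
    by (auto simp: less_Suc_eq_le psubset_imp_subset card_mono)
  have "extend_code C' y = C" if y: "y \<in> C" "y \<notin> C'" for y
  proof (rule ccontr)
    assume "extend_code C' y \<noteq> C"
    then have "?P (extend_code C' y)"
      using linear_code_extend_code extend_code_subset C C' y(1) by blast
    then have "extend_code C' y = C'"
      using greatest card_seteq[OF finite subset_extend_code] by blast
    then show False
      using in_extend_code C' y(2) by blast
  qed
  with C' that show thesis
    by blast
qed

lemma scale_in_maximal_subcode_iff:
  fixes C :: "('n::finite \<Rightarrow> 'a::{comm_ring_1,finite}) set"
  assumes loc: "local_ring TYPE('a)" and C: "linear_code C" and C': "linear_code C'" "C' \<subseteq> C"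
    and maximal: "\<And>y. y \<in> C \<Longrightarrow> y \<notin> C' \<Longrightarrow> extend_code C' y = C"
    and x: "x \<in> C" "x \<notin> C'"
  shows "(\<lambda>j. r * x j) \<in> C' \<longleftrightarrow> r \<in> max_ideal TYPE('a)"
proof
  assume rx: "(\<lambda>j. r * x j) \<in> C'"
  show "r \<in> max_ideal TYPE('a)"
  proof (rule ccontr)
    assume "r \<notin> max_ideal TYPE('a)"
    then obtain v where "v * r = 1"
      using unit_if_notin_max_ideal[OF loc] by blast
    then have "(\<lambda>j. v * (r * x j)) = x"
      by (simp flip: mult.assoc)
    then show False
      using linear_code_scale[OF C'(1) rx, of v] x(2) by simp
  qed
next
  assume r: "r \<in> max_ideal TYPE('a)"
  show "(\<lambda>j. r * x j) \<in> C'"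
  proof (rule ccontr)
    assume "(\<lambda>j. r * x j) \<notin> C'"
    then have "x \<in> extend_code C' (\<lambda>j. r * x j)"
      using maximal[OF linear_code_scale[OF C x(1)]] x(1) by simp
    then obtain c s where c: "c \<in> C'" "x = (\<lambda>j. c j + s * (r * x j))"
      unfolding extend_code_def by blast
    have M: "is_ideal (max_ideal TYPE('a))"
      using maximal_ideal_max_ideal[OF loc] unfolding maximal_ideal_def by blast
    have "1 - s * r \<notin> max_ideal TYPE('a)"
    proof
      assume "1 - s * r \<in> max_ideal TYPE('a)"
      then have "(1 - s * r) + s * r \<in> max_ideal TYPE('a)"
        using M r ideal_mult_closed unfolding is_ideal_def by blast
      then show False
        using one_notin_max_ideal[OF loc] by simp
    qed
    then obtain v where v: "v * (1 - s * r) = 1"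
      using unit_if_notin_max_ideal[OF loc] by blast
    have "x = (\<lambda>j. v * c j)"
    proof
      fix j
      have "c j = (1 - s * r) * x j"
        using fun_cong[OF c(2), of j] by (simp add: algebra_simps)
      then show "x j = v * c j"
        using v by (simp flip: mult.assoc)
    qed
    then show False
      using linear_code_scale[OF C'(1) c(1), of v] x(2) by simp
  qed
qed

lemma card_extend_code:
  fixes C :: "('n::finite \<Rightarrow> 'a::{comm_ring_1,finite}) set"
  assumes C: "linear_code C"
  shows "CARD('a) * card C = card {r. (\<lambda>j. r * x j) \<in> C} * card (extend_code C x)"
proof -
  define g where "g p = (\<lambda>j. snd p j + fst p * x j)" for p :: "'a \<times> ('n \<Rightarrow> 'a)"
  define K where "K = {p \<in> UNIV \<times> C. g p = 0}"
  have "card ((UNIV :: 'a set) \<times> C) = card K * card (g ` (UNIV \<times> C))"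
    unfolding K_def
    by (rule card_eq_card_kernel_mult_card_image[of "UNIV \<times> C" g])
      (auto simp: g_def linear_code_add[OF C] linear_code_uminus[OF C] algebra_simps)
  moreover have "g ` (UNIV \<times> C) = extend_code C x"
    unfolding g_def extend_code_def by force
  moreover have "bij_betw fst K {r. (\<lambda>j. r * x j) \<in> C}"
  proof (rule bij_betw_byWitness[where f' = "\<lambda>r. (r, - (\<lambda>j. r * x j))"])
    have snd_K: "snd p = - (\<lambda>j. fst p * x j)" if "p \<in> K" for p
      using that unfolding K_def g_def by (auto simp: fun_eq_iff eq_neg_iff_add_eq_0)
    then show "\<forall>p\<in>K. (fst p, - (\<lambda>j. fst p * x j)) = p"
      by (simp add: prod_eq_iff)
    show "fst ` K \<subseteq> {r. (\<lambda>j. r * x j) \<in> C}"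
      using snd_K linear_code_uminus[OF C] unfolding K_def by fastforce
    show "(\<lambda>r. (r, - (\<lambda>j. r * x j))) ` {r. (\<lambda>j. r * x j) \<in> C} \<subseteq> K"
      using linear_code_uminus[OF C] unfolding K_def g_def by auto
  qed simp
  ultimately show ?thesis
    by (simp add: card_cartesian_product bij_betw_same_card)
qed

lemma dual_code_extend_code:
  assumes "linear_code C"
  shows "dual_code (extend_code C x) = {u \<in> dual_code C. inner_std u x = 0}"
proof
  show "dual_code (extend_code C x) \<subseteq> {u \<in> dual_code C. inner_std u x = 0}"
    using subset_extend_code in_extend_code[OF assms] unfolding dual_code_def by blast
  show "{u \<in> dual_code C. inner_std u x = 0} \<subseteq> dual_code (extend_code C x)"
    unfolding dual_code_def extend_code_def by (auto simp: inner_std_add_right inner_std_scale_right)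
qed

lemma card_dual_code_le_card_dual_code_extend:
  fixes C :: "('n::finite \<Rightarrow> 'a::{comm_ring_1,finite}) set"
  assumes C: "linear_code C" and Mx: "\<And>m. m \<in> max_ideal TYPE('a) \<Longrightarrow> (\<lambda>j. m * x j) \<in> C"
  shows "card (dual_code C) \<le> card (dual_code (extend_code C x)) * card (socle TYPE('a))"
proof -
  let ?f = "\<lambda>u. inner_std u x"
  have "card (dual_code C) = card {u \<in> dual_code C. ?f u = 0} * card (?f ` dual_code C)"
    by (rule card_eq_card_kernel_mult_card_image)
      (auto simp: linear_code_add[OF linear_code_dual_code] linear_code_uminus[OF linear_code_dual_code]
        inner_std_def distrib_right sum.distrib)
  moreover have "?f ` dual_code C \<subseteq> socle TYPE('a)"
    using Mx unfolding socle_def dual_code_def by (auto simp flip: inner_std_scale_right)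
  ultimately show ?thesis
    using dual_code_extend_code[OF C] card_mono[OF finite] by (metis mult_le_mono2)
qed

lemma card_mult_card_dual_code_le_maximal_subcode:
  fixes C :: "('n::finite \<Rightarrow> 'a::{comm_ring_1,finite}) set"
  assumes frob: "frobenius_local_ring TYPE('a)" and C: "linear_code C"
    and C': "linear_code C'" "C' \<subset> C"
    and maximal: "\<And>y. y \<in> C \<Longrightarrow> y \<notin> C' \<Longrightarrow> extend_code C' y = C"
  shows "card C' * card (dual_code C') \<le> card C * card (dual_code C)"
proof -
  have loc: "local_ring TYPE('a)"
    using frob unfolding frobenius_local_ring_def by blast
  obtain x where x: "x \<in> C" "x \<notin> C'"
    using C'(2) by blast
  have C_eq: "extend_code C' x = C"
    using maximal x by blast
  have coefficients: "{r. (\<lambda>j. r * x j) \<in> C'} = max_ideal TYPE('a)"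
    using scale_in_maximal_subcode_iff[OF loc C C'(1) _ maximal x] C'(2) by blast
  have count: "CARD('a) * card C' = card (max_ideal TYPE('a)) * card C"
    using card_extend_code[OF C'(1), of x] coefficients C_eq by simp
  have dual: "card (dual_code C') \<le> card (dual_code C) * card (socle TYPE('a))"
    using card_dual_code_le_card_dual_code_extend[OF C'(1), of x] coefficients C_eq by blast
  have "CARD('a) * (card C' * card (dual_code C'))
      \<le> CARD('a) * card C' * (card (dual_code C) * card (socle TYPE('a)))"
    using dual by simp
  also have "\<dots> = card C * card (dual_code C) * (card (socle TYPE('a)) * card (max_ideal TYPE('a)))"
    using count by (simp add: ac_simps)
  also have "\<dots> \<le> card C * card (dual_code C) * CARD('a)"
    using card_socle_mult_card_max_ideal_le[OF frob] by simp
  finally show ?thesis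
    by (simp add: mult.commute)
qed

lemma card_univ_le_card_mult_card_dual_code:
  fixes C :: "('n::finite \<Rightarrow> 'a::{comm_ring_1,finite}) set"
  assumes frob: "frobenius_local_ring TYPE('a)" and "linear_code C"
  shows "CARD('n \<Rightarrow> 'a) \<le> card C * card (dual_code C)"
  using assms(2)
proof (induction "card C" arbitrary: C rule: less_induct)
  case less
  show ?case
  proof (cases "C = {\<lambda>j. 0}")
    case True
    then have "dual_code C = UNIV"
      unfolding dual_code_def inner_std_def by simp
    with True show ?thesis
      by simp
  next
    case False
    then obtain C' where C': "linear_code C'" "C' \<subset> C"
      and maximal: "\<And>y. y \<in> C \<Longrightarrow> y \<notin> C' \<Longrightarrow> extend_code C' y = C"
      using obtain_maximal_subcode[OF less.prems] by blast
    have "CARD('n \<Rightarrow> 'a) \<le> card C' * card (dual_code C')"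
      using less.hyps[OF psubset_card_mono[OF finite C'(2)] C'(1)] .
    also have "\<dots> \<le> card C * card (dual_code C)"
      using card_mult_card_dual_code_le_maximal_subcode[OF frob less.prems C' maximal] .
    finally show ?thesis .
  qed
qed

lemma card_row_span_le_card_column_span:
  fixes A :: "'k::finite \<Rightarrow> 'n::finite \<Rightarrow> 'a::{comm_ring_1,finite}"
  assumes frob: "frobenius_local_ring TYPE('a)"
  shows "card (row_span A) \<le> card (row_span (\<lambda>j i. A i j))"
proof -
  let ?D = "dual_code (row_span (\<lambda>j i. A i j))"
  have "card ?D * card (row_span A) = CARD('k \<Rightarrow> 'a)"
    using card_dual_code_row_span_mult_card_column_span[of "\<lambda>j i. A i j"] by simp
  also have "\<dots> \<le> card ?D * card (row_span (\<lambda>j i. A i j))"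
    using card_univ_le_card_mult_card_dual_code[OF frob linear_code_row_span] by (simp add: mult.commute)
  finally show ?thesis
    using card_linear_code_gt_0[OF linear_code_dual_code[of "row_span (\<lambda>j i. A i j)"]] by simp
qed

theorem card_mult_card_dual_code:
  fixes C :: "('n::finite \<Rightarrow> 'a::{comm_ring_1,finite}) set"
  assumes frob: "frobenius_local_ring TYPE('a)" and C: "linear_code C"
  shows "card C * card (dual_code C) = CARD('n \<Rightarrow> 'a)"
proof -
  obtain A :: "('n \<Rightarrow> 'a) \<Rightarrow> 'n \<Rightarrow> 'a" where A: "row_span A = C"
    using row_span_codeword_matrix[OF C] by blast
  have "card (dual_code C) * card C \<le> card (dual_code C) * card (row_span (\<lambda>j i. A i j))"
    using card_row_span_le_card_column_span[OF frob, of A] A by simp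
  also have "\<dots> = CARD('n \<Rightarrow> 'a)"
    using card_dual_code_row_span_mult_card_column_span[of A] A by simp
  finally show ?thesis
    using card_univ_le_card_mult_card_dual_code[OF frob C] by (simp add: mult.commute)
qed

lemma dual_code_dual_code:
  fixes C :: "('n::finite \<Rightarrow> 'a::{comm_ring_1,finite}) set"
  assumes frob: "frobenius_local_ring TYPE('a)" and C: "linear_code C"
  shows "dual_code (dual_code C) = C"
proof -
  have "card C * card (dual_code C) = card (dual_code (dual_code C)) * card (dual_code C)"
    using card_mult_card_dual_code[OF frob C] card_mult_card_dual_code[OF frob linear_code_dual_code[of C]]
    by (simp add: mult.commute)
  then have "card (dual_code (dual_code C)) = card C"
    using card_linear_code_gt_0[OF linear_code_dual_code[of C]] by auto
  moreover have "C \<subseteq> dual_code (dual_code C)"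
    unfolding dual_code_def by (auto simp: inner_std_commute)
  ultimately show ?thesis
    using card_seteq[of "dual_code (dual_code C)" C] by auto
qed

lemma code_hull_dual_code:
  fixes C :: "('n::finite \<Rightarrow> 'a::{comm_ring_1,finite}) set"
  assumes "frobenius_local_ring TYPE('a)" "linear_code C"
  shows "code_hull (dual_code C) = code_hull C"
  unfolding code_hull_def dual_code_dual_code[OF assms] by blast

section \<open>The hull and the Gram matrix\<close>

lemma card_row_span_eq_card_hull_mult_card_gram_span:
  fixes A :: "'k::finite \<Rightarrow> 'n::finite \<Rightarrow> 'a::{comm_ring_1,finite}"
  shows "card (row_span A) = card (code_hull (row_span A)) * card (row_span (mat_mult_transpose A))"
proof -
  let ?f = "\<lambda>c i. inner_std c (A i)"
  have "card (row_span A) = card {c \<in> row_span A. ?f c = 0} * card (?f ` row_span A)"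
    by (rule card_eq_card_kernel_mult_card_image)
      (auto simp: linear_code_add[OF linear_code_row_span] linear_code_uminus[OF linear_code_row_span]
        fun_eq_iff inner_std_def distrib_right sum.distrib)
  moreover have "{c \<in> row_span A. ?f c = 0} = code_hull (row_span A)"
    unfolding code_hull_def dual_code_row_span by (auto simp: fun_eq_iff)
  moreover have "?f ` row_span A = row_span (mat_mult_transpose A)"
  proof -
    have "?f (\<lambda>j. \<Sum>i\<in>UNIV. c i * A i j) = (\<lambda>i'. \<Sum>i\<in>UNIV. c i * mat_mult_transpose A i i')" for c
    proof
      fix i'
      have "inner_std (\<lambda>j. \<Sum>i\<in>UNIV. c i * A i j) (A i') = (\<Sum>i\<in>UNIV. c i * inner_std (A i') (A i))"
        by (simp add: inner_std_commute[of _ "A i'"] inner_std_row_comb)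
      also have "\<dots> = (\<Sum>i\<in>UNIV. c i * mat_mult_transpose A i i')"
        unfolding mat_mult_transpose_def by (simp add: inner_std_def mult.commute)
      finally show "?f (\<lambda>j. \<Sum>i\<in>UNIV. c i * A i j) i' = (\<Sum>i\<in>UNIV. c i * mat_mult_transpose A i i')" .
    qed
    then show ?thesis
      unfolding row_span_eq_range image_image by simp
  qed
  ultimately show ?thesis
    by simp
qed

lemma rank_q_eq_dim_q_hull_plus_rank_q_gram:
  fixes A :: "'k::finite \<Rightarrow> 'n::finite \<Rightarrow> 'a::{comm_ring_1,finite}"
  shows "rank_q q A = dim_q q (code_hull (row_span A)) + rank_q q (mat_mult_transpose A)"
proof -
  have "(\<lambda>j. 0) \<in> code_hull (row_span A)"
    using linear_code_row_span[of A] linear_code_dual_code[of "row_span A"]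
    unfolding code_hull_def linear_code_def by blast
  then have "card (code_hull (row_span A)) > 0"
    by (auto simp: card_gt_0_iff)
  then show ?thesis
    unfolding rank_q_def dim_q_def card_row_span_eq_card_hull_mult_card_gram_span[of A]
    using card_linear_code_gt_0[OF linear_code_row_span[of "mat_mult_transpose A"]]
    by (simp add: log_mult_pos)
qed

theorem corollary3p13:
  fixes C :: "('n::finite \<Rightarrow> 'a::{comm_ring_1,finite}) set"
    and G :: "'k::finite \<Rightarrow> 'n \<Rightarrow> 'a"
    and H :: "'m::finite \<Rightarrow> 'n \<Rightarrow> 'a"
    and q l :: nat
  assumes "frobenius_local_ring TYPE('a)"
    and "q = residue_card TYPE('a)"
    and "linear_code C"
    and "generator_matrix G C"
    and "parity_check_matrix H C"
  shows "dim_q q (code_hull C) = real l \<longleftrightarrow>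
           (rank_q q (mat_mult_transpose G) = rank_q q G - real l \<or>
            rank_q q (mat_mult_transpose H) = rank_q q H - real l)"
proof -
  have G: "row_span G = C" and H: "row_span H = dual_code C"
    using assms(4,5) unfolding generator_matrix_def parity_check_matrix_def by simp_all
  have "rank_q q G = dim_q q (code_hull C) + rank_q q (mat_mult_transpose G)"
    using rank_q_eq_dim_q_hull_plus_rank_q_gram[of q G] G by simp
  moreover have "rank_q q H = dim_q q (code_hull C) + rank_q q (mat_mult_transpose H)"
    using rank_q_eq_dim_q_hull_plus_rank_q_gram[of q H] H code_hull_dual_code[OF assms(1,3)] by simp
  ultimately show ?thesis
    by linarith
qed

end
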